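(* Let $f:[0,1]\to[0,1]$ be a surjective continuous function that does not admit a splitting sequence. Let $F$ be the set of fixed points of $f$ and let $d$ be an accumulation point of $F$. Then $$\varprojlim f=\varprojlim([0,d],f|_{[0,d]})\cup\varprojlim([d,1],f|_{[d,1]})$$ and $$\varprojlim([0,d],f|_{[0,d]})\cap\varprojlim([d,1],f|_{[d,1]})=\{(d,d,\dots)\}.$$
   Context: $\varprojlim f=\{\mathbf x=(x_0,x_1,\dots)\in[0,1]^{\mathbb N}: f(x_{n+1})=x_n\ \forall n\}$ with the product topology. For a closed interval $J\subseteq[0,1]$, $\varprojlim(J,f|_J)=\{\mathbf x\in\varprojlim f: x_n\in J\text{ for all }n\}$. A sequence $(T_n)_{n\in\mathbb N}$ of closed intervals $T_n\subsetneq[0,1]$ (possibly degenerate) is tight if $f(T_{n+1})=T_n$ for every $n$ and $T_n$ is nondegenerate for all sufficiently large $n$. A tight sequence $(T_n)$, $T_n=[l_n,r_n]$, is a splitting sequence admitted by $f$ if there are an infinite set $N\subseteq\mathbb N$ and nondegenerate closed intervals $S_n\subseteq[0,1]$ ($n\in N$) with $S_n\cap T_n\subseteq\{l_n,r_n\}$ and $f(S_n)=f(T_n)$ for all $n\in N$. *)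

theory Defs
  imports "HOL-Analysis.Analysis"
begin

definition inv_lim :: "(real \<Rightarrow> real) \<Rightarrow> (nat \<Rightarrow> real) set" where
  "inv_lim f = {x. (\<forall>n. x n \<in> {0..1}) \<and> (\<forall>n. f (x (Suc n)) = x n)}"

definition inv_lim_on :: "real set \<Rightarrow> (real \<Rightarrow> real) \<Rightarrow> (nat \<Rightarrow> real) set" where
  "inv_lim_on J f = {x \<in> inv_lim f. \<forall>n. x n \<in> J}"

definition tight :: "(real \<Rightarrow> real) \<Rightarrow> (nat \<Rightarrow> real) \<Rightarrow> (nat \<Rightarrow> real) \<Rightarrow> bool" where
  "tight f l r \<longleftrightarrow>
     (\<forall>n. 0 \<le> l n \<and> l n \<le> r n \<and> r n \<le> 1 \<and> {l n..r n} \<noteq> {0..1}) \<and>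
     (\<forall>n. f ` {l (Suc n)..r (Suc n)} = {l n..r n}) \<and>
     (\<exists>m. \<forall>n\<ge>m. l n < r n)"

definition splitting_seq :: "(real \<Rightarrow> real) \<Rightarrow> (nat \<Rightarrow> real) \<Rightarrow> (nat \<Rightarrow> real) \<Rightarrow> bool" where
  "splitting_seq f l r \<longleftrightarrow> tight f l r \<and>
     (\<exists>N::nat set. infinite N \<and> (\<exists>a b :: nat \<Rightarrow> real. \<forall>n\<in>N.
        0 \<le> a n \<and> a n < b n \<and> b n \<le> 1 \<and>
        {a n..b n} \<inter> {l n..r n} \<subseteq> {l n, r n} \<and>
        f ` {a n..b n} = f ` {l n..r n}))"

definition admits_splitting_seq :: "(real \<Rightarrow> real) \<Rightarrow> bool" where
  "admits_splitting_seq f \<longleftrightarrow> (\<exists>l r. splitting_seq f l r)"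

end

theory Submission
  imports Defs
begin

text \<open>
  Suppose d < y but f y < d (the case y < d < f y is symmetric). Take a fixed point p so
  close to d that the interval [a, b] spanned by d and p lies strictly between f y and y.
  As f fixes a and b, [a, b] is covered by its own image, so it contains a backward chain
  of nondegenerate intervals T n with f (T (n + 1)) = T n. The interval from b to y meets
  [a, b] only in b and its image covers [a, b], so it contains intervals S n with
  f (S n) = T (n - 1) = f (T n): a splitting sequence. Hence, if there is none, f maps
  [0, d] and [d, 1] into themselves. A point of the inverse limit visiting both sides of d
  is then impossible, since all coordinates before a given one stay on its side.
\<close>

lemma Icc_subset_image_Icc:
  fixes f :: "real \<Rightarrow> real"
  assumes "continuous_on {u..v} f" "u \<le> v"
  shows "{f u..f v} \<subseteq> f ` {u..v}" "{f v..f u} \<subseteq> f ` {u..v}"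
  using IVT'[of f u _ v] IVT2'[of f v _ u] assms by (fastforce simp: image_iff)+

lemma exists_subinterval_image_eq_Icc_ordered:
  fixes f :: "real \<Rightarrow> real"
  assumes cont: "continuous_on {x1..x2} f" and "x1 < x2" "f x1 = a" "f x2 = b" "a < b"
  shows "\<exists>s t. x1 \<le> s \<and> s < t \<and> t \<le> x2 \<and> f ` {s..t} = {a..b}"
proof -
  \<comment> \<open>s is the last a-value of f in [x1, x2] and t the first b-value after s,
    so f takes neither value a nor b strictly between s and t\<close>
  define A where "A = {x \<in> {x1..x2}. f x = a}"
  define s where "s = Sup A"
  have "closed A" unfolding A_def by (rule continuous_closed_preimage_constant[OF cont]) simp
  moreover have "x1 \<in> A" "bdd_above A" using assms unfolding A_def by auto
  ultimately have "s \<in> A" unfolding s_def by (intro closed_contains_Sup) auto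
  then have s: "x1 \<le> s" "s \<le> x2" "f s = a" unfolding A_def by auto
  have s_last: "x \<le> s" if "x \<in> A" for x
    unfolding s_def using cSup_upper[OF that \<open>bdd_above A\<close>] .
  have cont_s: "continuous_on {s..x2} f" using continuous_on_subset[OF cont] s by auto
  define B where "B = {x \<in> {s..x2}. f x = b}"
  define t where "t = Inf B"
  have "closed B" unfolding B_def by (rule continuous_closed_preimage_constant[OF cont_s]) simp
  moreover have "x2 \<in> B" "bdd_below B" using assms s unfolding B_def by auto
  ultimately have "t \<in> B" unfolding t_def by (intro closed_contains_Inf) auto
  then have t: "s \<le> t" "t \<le> x2" "f t = b" unfolding B_def by auto
  have t_first: "t \<le> x" if "x \<in> B" for x
    unfolding t_def using cInf_lower[OF that \<open>bdd_below B\<close>] .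
  have "s \<noteq> t" using s(3) t(3) \<open>a < b\<close> by auto
  with t(1) have "s < t" by simp
  have cont_st: "continuous_on {s..t} f" using continuous_on_subset[OF cont] s t by auto
  have "f z \<in> {a..b}" if z: "z \<in> {s..t}" for z
  proof (rule ccontr)
    assume "f z \<notin> {a..b}"
    then consider "f z < a" | "b < f z" by force
    then show False
    proof cases
      case 1
          then obtain w where "z \<le> w" "w \<le> t" "f w = a"
        using IVT'[of f z a t] continuous_on_subset[OF cont_st, of "{z..t}"] z t \<open>a < b\<close> by auto
      moreover have "s < z" using 1 s z by (cases "z = s") auto
      ultimately have "w \<in> A" "s < w" unfolding A_def using s t by auto
      then show False using s_last by fastforce
    next
      case 2
      then obtain w where "s \<le> w" "w \<le> z" "f w = b"
        using IVT'[of f s b z] continuous_on_subset[OF cont_st, of "{s..z}"] z s \<open>a < b\<close> by auto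
      moreover have "z < t" using 2 t z by (cases "z = t") auto
      ultimately have "w \<in> B" "w < t" unfolding B_def using s t by auto
      then show False using t_first by fastforce
    qed
  qed
  moreover have "{a..b} \<subseteq> f ` {s..t}"
    using Icc_subset_image_Icc(1)[OF cont_st] \<open>s < t\<close> s t by simp
  ultimately have "f ` {s..t} = {a..b}" by (intro equalityI image_subsetI)
  with s(1) t(2) \<open>s < t\<close> show ?thesis by (intro exI[of _ s] exI[of _ t]) simp
qed

lemma exists_subinterval_image_eq_Icc:
  fixes f :: "real \<Rightarrow> real"
  assumes cont: "continuous_on {u..v} f" and "a < b" and cover: "{a..b} \<subseteq> f ` {u..v}"
  shows "\<exists>s t. u \<le> s \<and> s < t \<and> t \<le> v \<and> f ` {s..t} = {a..b}"
proof -
  have "a \<in> f ` {u..v}" "b \<in> f ` {u..v}" using cover \<open>a < b\<close> by auto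
  then obtain x1 x2 where x: "x1 \<in> {u..v}" "f x1 = a" "x2 \<in> {u..v}" "f x2 = b" by blast
  have "x1 \<noteq> x2" using x \<open>a < b\<close> by auto
  then consider "x1 < x2" | "x2 < x1" by linarith
  then show ?thesis
  proof cases
    case 1
    have "continuous_on {x1..x2} f" using continuous_on_subset[OF cont] x by auto
    then obtain s t where st: "x1 \<le> s" "s < t" "t \<le> x2" "f ` {s..t} = {a..b}"
      using exists_subinterval_image_eq_Icc_ordered[OF _ 1 x(2,4) \<open>a < b\<close>] by blast
    have "u \<le> s" "t \<le> v" using st x by auto
    with st show ?thesis by blast
  next
    case 2
    have "continuous_on {x2..x1} (\<lambda>x. - f x)"
      using continuous_on_minus[OF continuous_on_subset[OF cont]] x by auto
    then obtain s t where st: "x2 \<le> s" "s < t" "t \<le> x1" "(\<lambda>x. - f x) ` {s..t} = {-b..-a}"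
      using exists_subinterval_image_eq_Icc_ordered[OF _ 2, of "\<lambda>x. - f x" "-b" "-a"] x \<open>a < b\<close> by auto
    have "f ` {s..t} = uminus ` (\<lambda>x. - f x) ` {s..t}" by (simp add: image_image)
    also have "\<dots> = {a..b}" using st(4) by simp
    finally have "f ` {s..t} = {a..b}" .
    moreover have "u \<le> s" "t \<le> v" using st x by auto
    ultimately show ?thesis using st(2) by blast
  qed
qed

lemma exists_backward_Icc_chain:
  fixes f :: "real \<Rightarrow> real"
  assumes cont: "continuous_on {a..b} f" and "a < b" and cover: "{a..b} \<subseteq> f ` {a..b}"
  shows "\<exists>l r. \<forall>n. a \<le> l n \<and> l n < r n \<and> r n \<le> b \<and> f ` {l (Suc n)..r (Suc n)} = {l n..r n}"
proof -
  define P where "P = (\<lambda>(n::nat) (p :: real \<times> real). a \<le> fst p \<and> fst p < snd p \<and> snd p \<le> b)"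
  define Q where "Q = (\<lambda>(n::nat) (p :: real \<times> real) q. f ` {fst q..snd q} = {fst p..snd p})"
  have step: "\<exists>q. P (Suc n) q \<and> Q n p q" if p: "P n p" for n p
  proof -
    have "{fst p..snd p} \<subseteq> f ` {a..b}" using p cover unfolding P_def by auto
    then obtain s t where "a \<le> s" "s < t" "t \<le> b" "f ` {s..t} = {fst p..snd p}"
      using exists_subinterval_image_eq_Icc[OF cont] p unfolding P_def by blast
    then show ?thesis unfolding P_def Q_def by (intro exI[of _ "(s, t)"]) simp
  qed
  have "P 0 (a, b)" using \<open>a < b\<close> unfolding P_def by simp
  then obtain T where "\<And>n. P n (T n) \<and> Q n (T n) (T (Suc n))"
    using dependent_nat_choice[of P Q] step by blast
  then show ?thesis unfolding P_def Q_def by (intro exI[of _ "fst \<circ> T"] exI[of _ "snd \<circ> T"]) simp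
qed

lemma tight_if_backward_Icc_chain:
  assumes T: "\<And>n. a \<le> l n" "\<And>n. l n < r n" "\<And>n. r n \<le> b"
      "\<And>n. f ` {l (Suc n)..r (Suc n)} = {l n..r n}"
    and ab: "0 \<le> a" "b \<le> 1" "{a..b} \<noteq> {0..1}"
  shows "tight f l r"
proof -
  have "{l n..r n} \<noteq> {0..1}" for n
  proof
    assume "{l n..r n} = {0..1}"
    then have "l n = 0" "r n = 1" using T(2)[of n] by simp_all
    then have "a = 0" "b = 1" using T(1,3)[of n] ab(1,2) by auto
    then show False using ab(3) by simp
  qed
  moreover have "0 \<le> l n" "r n \<le> 1" for n using T(1,3)[of n] ab(1,2) by linarith+
  ultimately show ?thesis unfolding tight_def using T(2,4) by (auto intro: less_imp_le)
qed

lemma admits_splitting_seqI: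
  fixes f :: "real \<Rightarrow> real"
  assumes cont: "continuous_on {0..1} f"
    and ab: "0 \<le> a" "a < b" "b \<le> 1" "f a = a" "f b = b" "{a..b} \<noteq> {0..1}"
    and uv: "0 \<le> u" "u < v" "v \<le> 1"
    and disjoint: "{u..v} \<inter> {a..b} \<subseteq> {a, b}"
    and cover: "{a..b} \<subseteq> f ` {u..v}"
  shows "admits_splitting_seq f"
proof -
  have cont_ab: "continuous_on {a..b} f" and cont_uv: "continuous_on {u..v} f"
    using continuous_on_subset[OF cont] ab uv by auto
  have "{a..b} \<subseteq> f ` {a..b}" using Icc_subset_image_Icc(1)[OF cont_ab] ab by simp
  then obtain l r where "\<forall>n. a \<le> l n \<and> l n < r n \<and> r n \<le> b \<and> f ` {l (Suc n)..r (Suc n)} = {l n..r n}"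
    using exists_backward_Icc_chain[OF cont_ab \<open>a < b\<close>] by blast
  then have T: "a \<le> l n" "l n < r n" "r n \<le> b" "f ` {l (Suc n)..r (Suc n)} = {l n..r n}" for n
    by auto
  have "tight f l r" using tight_if_backward_Icc_chain[of a l r b f, OF T] ab(1,3,6) .
  have "\<forall>n. \<exists>s t. u \<le> s \<and> s < t \<and> t \<le> v \<and> f ` {s..t} = {l n..r n}"
  proof
    fix n
    have "{l n..r n} \<subseteq> f ` {u..v}" using T(1,3)[of n] cover by auto
    then show "\<exists>s t. u \<le> s \<and> s < t \<and> t \<le> v \<and> f ` {s..t} = {l n..r n}"
      using exists_subinterval_image_eq_Icc[OF cont_uv T(2)] by blast
  qed
  then obtain s t where "\<forall>n. u \<le> s n \<and> s n < t n \<and> t n \<le> v \<and> f ` {s n..t n} = {l n..r n}"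
    by metis
  then have S: "u \<le> s n" "s n < t n" "t n \<le> v" "f ` {s n..t n} = {l n..r n}" for n
    by auto
  \<comment> \<open>S (n + 1) = [s n, t n] splits off T (n + 1), since f maps both onto T n\<close>
  have "0 \<le> s n \<and> s n < t n \<and> t n \<le> 1 \<and>
      {s n..t n} \<inter> {l (Suc n)..r (Suc n)} \<subseteq> {l (Suc n), r (Suc n)} \<and>
      f ` {s n..t n} = f ` {l (Suc n)..r (Suc n)}" for n
  proof -
    have "{s n..t n} \<inter> {l (Suc n)..r (Suc n)} \<subseteq> {u..v} \<inter> {a..b}"
      using S(1,3)[of n] T(1,3)[of "Suc n"] by auto
    with disjoint have "{s n..t n} \<inter> {l (Suc n)..r (Suc n)} \<subseteq> {a, b} \<inter> {l (Suc n)..r (Suc n)}"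
      by blast
    also have "\<dots> \<subseteq> {l (Suc n), r (Suc n)}" using T(1,3)[of "Suc n"] by auto
    finally show ?thesis using S[of n] T(4)[of n] uv by auto
  qed
  then have "\<forall>n\<in>range Suc. 0 \<le> s (n - 1) \<and> s (n - 1) < t (n - 1) \<and> t (n - 1) \<le> 1 \<and>
      {s (n - 1)..t (n - 1)} \<inter> {l n..r n} \<subseteq> {l n, r n} \<and> f ` {s (n - 1)..t (n - 1)} = f ` {l n..r n}"
    by auto
  moreover have "infinite (range Suc)" using range_inj_infinite[OF inj_Suc] .
  ultimately have "splitting_seq f l r"
    unfolding splitting_seq_def using \<open>tight f l r\<close>
    by (intro conjI exI[of _ "range Suc"] exI[of _ "\<lambda>n. s (n - 1)"] exI[of _ "\<lambda>n. t (n - 1)"])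
  then show ?thesis unfolding admits_splitting_seq_def by blast
qed

lemma limit_fixpoint_sides_invariant:
  fixes f :: "real \<Rightarrow> real"
  assumes cont: "continuous_on {0..1} f" and nosplit: "\<not> admits_splitting_seq f"
    and d: "d \<in> {0..1}" "f d = d" and acc: "d islimpt {x \<in> {0..1}. f x = x}"
    and y: "y \<in> {0..1}"
  shows "y \<le> d \<Longrightarrow> f y \<le> d" and "d \<le> y \<Longrightarrow> d \<le> f y"
proof -
  have "0 \<le> (y - d) * (f y - d)"
  proof (rule ccontr)
    assume "\<not> ?thesis"
    then have cross: "d < y \<and> f y < d \<or> y < d \<and> d < f y" by (auto simp: not_le mult_less_0_iff)
    define e where "e = min \<bar>y - d\<bar> (min \<bar>f y - d\<bar> (1/2))"
    have "0 < e" using cross unfolding e_def by auto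
    with acc obtain p where "p \<in> {x \<in> {0..1}. f x = x}" "p \<noteq> d" "dist p d < e"
      unfolding islimpt_approachable by blast
    then have p: "p \<in> {0..1}" "f p = p" "p \<noteq> d" "\<bar>p - d\<bar> < e" by (auto simp: dist_real_def)
    define a b where "a = min d p" and "b = max d p"
    have ab: "0 \<le> a" "a < b" "b \<le> 1" "f a = a" "f b = b"
      using p d unfolding a_def b_def by auto
    have "b - a < 1" using p(4) unfolding a_def b_def e_def by (auto simp: min_def max_def split: if_splits)
    then have proper: "{a..b} \<noteq> {0..1}" by auto
    from cross have "admits_splitting_seq f"
    proof
      assume "d < y \<and> f y < d"
      then have "b < y" "f y < a" using p(4) unfolding a_def b_def e_def by auto
      have "{a..b} \<subseteq> {f y..f b}" using \<open>f y < a\<close> ab(5) by auto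
      also have "\<dots> \<subseteq> f ` {b..y}"
        using Icc_subset_image_Icc(2)[OF continuous_on_subset[OF cont]] ab(1,2) y \<open>b < y\<close> by auto
      finally show ?thesis
        using admits_splitting_seqI[OF cont ab proper, of b y] ab(1,2) y \<open>b < y\<close> by auto
    next
      assume "y < d \<and> d < f y"
      then have "y < a" "b < f y" using p(4) unfolding a_def b_def e_def by auto
      have "{a..b} \<subseteq> {f a..f y}" using \<open>b < f y\<close> ab(4) by auto
      also have "\<dots> \<subseteq> f ` {y..a}"
        using Icc_subset_image_Icc(2)[OF continuous_on_subset[OF cont]] ab(2,3) y \<open>y < a\<close> by auto
      finally show ?thesis
        using admits_splitting_seqI[OF cont ab proper, of y a] ab(2,3) y \<open>y < a\<close> by auto
    qed
    with nosplit show False by contradiction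
  qed
  then show "y \<le> d \<Longrightarrow> f y \<le> d" and "d \<le> y \<Longrightarrow> d \<le> f y"
    using d(2) by (cases "y = d"; auto simp: zero_le_mult_iff)+
qed

lemma inv_lim_mem_backward:
  assumes x: "x \<in> inv_lim f" and J: "\<And>y. y \<in> {0..1} \<Longrightarrow> y \<in> J \<Longrightarrow> f y \<in> J"
    and "x n \<in> J" "m \<le> n"
  shows "x m \<in> J"
  using \<open>m \<le> n\<close>
proof (induction rule: inc_induct)
  case base
  show ?case by fact
next
  case (step k)
  have "x k = f (x (Suc k))" "x (Suc k) \<in> {0..1}" using x unfolding inv_lim_def by auto
  with J step.IH show ?case by simp
qed

lemma inv_lim_eq_Un_inv_lim_on:
  fixes f :: "real \<Rightarrow> real"
  assumes below: "\<And>y. y \<in> {0..1} \<Longrightarrow> y \<le> d \<Longrightarrow> f y \<le> d"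
    and above: "\<And>y. y \<in> {0..1} \<Longrightarrow> d \<le> y \<Longrightarrow> d \<le> f y"
  shows "inv_lim f = inv_lim_on {0..d} f \<union> inv_lim_on {d..1} f"
proof
  show "inv_lim_on {0..d} f \<union> inv_lim_on {d..1} f \<subseteq> inv_lim f"
    unfolding inv_lim_on_def by auto
  show "inv_lim f \<subseteq> inv_lim_on {0..d} f \<union> inv_lim_on {d..1} f"
  proof
    fix x assume x: "x \<in> inv_lim f"
    then have x01: "x n \<in> {0..1}" for n unfolding inv_lim_def by auto
    show "x \<in> inv_lim_on {0..d} f \<union> inv_lim_on {d..1} f"
    proof (rule ccontr)
      assume "\<not> ?thesis"
      then have "\<not> (\<forall>n. x n \<le> d)" "\<not> (\<forall>n. d \<le> x n)"
        using x x01 unfolding inv_lim_on_def by auto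
      then obtain m k where "d < x m" "x k < d" by (auto simp: not_le)
      have "x (max m k) \<in> {..d} \<or> x (max m k) \<in> {d..}" by auto
      then show False
      proof
        assume "x (max m k) \<in> {..d}"
        then have "x m \<in> {..d}" using inv_lim_mem_backward[OF x, of "{..d}" "max m k" m] below by auto
        with \<open>d < x m\<close> show False by simp
      next
        assume "x (max m k) \<in> {d..}"
        then have "x k \<in> {d..}" using inv_lim_mem_backward[OF x, of "{d..}" "max m k" k] above by auto
        with \<open>x k < d\<close> show False by simp
      qed
    qed
  qed
qed

lemma inv_lim_on_Int_eq_fixpoint:
  assumes "d \<in> {0..1}" "f d = d"
  shows "inv_lim_on {0..d} f \<inter> inv_lim_on {d..1} f = {(\<lambda>_. d)}"
proof
  show "inv_lim_on {0..d} f \<inter> inv_lim_on {d..1} f \<subseteq> {(\<lambda>_. d)}"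
  proof
    fix x assume "x \<in> inv_lim_on {0..d} f \<inter> inv_lim_on {d..1} f"
    then have "x n = d" for n unfolding inv_lim_on_def by (auto intro: order.antisym)
    then show "x \<in> {(\<lambda>_. d)}" by auto
  qed
  show "{(\<lambda>_. d)} \<subseteq> inv_lim_on {0..d} f \<inter> inv_lim_on {d..1} f"
    using assms unfolding inv_lim_on_def inv_lim_def by auto
qed

theorem corollary3p12:
  fixes f :: "real \<Rightarrow> real" and d :: real
  assumes cont: "continuous_on {0..1} f"
    and onto: "f ` {0..1} = {0..1}"
    and nosplit: "\<not> admits_splitting_seq f"
    and acc: "d islimpt {x \<in> {0..1}. f x = x}"
  shows "inv_lim f = inv_lim_on {0..d} f \<union> inv_lim_on {d..1} f \<and>
         inv_lim_on {0..d} f \<inter> inv_lim_on {d..1} f = {(\<lambda>_. d)}"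
proof -
  have "closed {x \<in> {0..1}. f x - x = 0}"
    by (intro continuous_closed_preimage_constant continuous_intros cont closed_atLeastAtMost)
  then have "closed {x \<in> {0..1}. f x = x}" by simp
  with acc have "d \<in> {x \<in> {0..1}. f x = x}" unfolding closed_limpt by blast
  then have d: "d \<in> {0..1}" "f d = d" by auto
  note sides = limit_fixpoint_sides_invariant[OF cont nosplit d acc]
  have "inv_lim f = inv_lim_on {0..d} f \<union> inv_lim_on {d..1} f"
    using sides by (rule inv_lim_eq_Un_inv_lim_on)
  with inv_lim_on_Int_eq_fixpoint[of d f, OF d] show ?thesis by blast
qed

end
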